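(* Let $L\in\mathbb N$, ${\bf A}\in\mathbb R^{M\times N}$, $\mathcal P_A={\bf A}^\dagger{\bf A}$, and let $\tilde{\bf x}^{(1)},\tilde{\bf x}^{(2)}:[0,\infty)\to\mathbb R^N$ be functions whose entries are all positive and bounded above and bounded away from zero, uniformly in $t$. Suppose $\lim_{t\to\infty}{\bf A}[\tilde{\bf x}^{(1)}(t)-\tilde{\bf x}^{(2)}(t)]=0$ and $$\begin{cases}\lim_{t\to\infty}(I-\mathcal P_A)[\log(\tilde{\bf x}^{(1)}(t))-\log(\tilde{\bf x}^{(2)}(t))]=0 & L=2,\\ \lim_{t\to\infty}(I-\mathcal P_A)[(\tilde{\bf x}^{(1)}(t))^{\odot(\frac2L-1)}-(\tilde{\bf x}^{(2)}(t))^{\odot(\frac2L-1)}]=0 & L\neq2.\end{cases}$$ Then $\lim_{t\to\infty}(\tilde{\bf x}^{(1)}(t)-\tilde{\bf x}^{(2)}(t))=0$.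
   Context: $\odot$ denotes entrywise power and $\log$ acts entrywise; ${\bf A}^\dagger$ is the Moore–Penrose pseudoinverse. *)

theory Defs
  imports "HOL-Analysis.Analysis"
begin

definition pinv :: "real^'n^'m \<Rightarrow> real^'m^'n" where
  "pinv A = (THE B. A ** B ** A = A \<and> B ** A ** B = B \<and>
               transpose (A ** B) = A ** B \<and> transpose (B ** A) = B ** A)"

definition epowr :: "real^'n \<Rightarrow> real \<Rightarrow> real^'n" where
  "epowr x p = (\<chi> i. (x $ i) powr p)"

definition elog :: "real^'n \<Rightarrow> real^'n" where
  "elog x = (\<chi> i. ln (x $ i))"

end

theory Submission
  imports Defs
begin

(*
  Put d = x1 - x2 and g = phi(x1) - phi(x2) entrywise, with phi = ln for L = 2 and
  phi = sgn p * (.) powr p, p = 2/L - 1, otherwise; the sign makes phi increasing.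
  The entries stay in a compact interval [c, C] on which phi' >= m > 0, so the mean
  value theorem gives m |d|^2 <= d . g.  As P = pinv A ** A is symmetric,
  d . g = (P d) . g + d . ((I - P) g); here P d = pinv A (A d) -> 0 and (I - P) g -> 0
  by hypothesis, while d and g stay bounded, so d . g -> 0 and hence d -> 0.
  Symmetry of P needs the Penrose solution to exist; it is built from the orthogonal
  projections (closest_point) onto the column and row spaces of A.
*)

lemma closest_point_in_subspace:
  fixes S :: "'a::euclidean_space set"
  shows "subspace S \<Longrightarrow> closest_point S x \<in> S"
  by (intro closest_point_in_set closed_subspace) (auto dest: subspace_0)

lemma closest_point_subspace_orthogonal:
  fixes S :: "'a::euclidean_space set"
  assumes "subspace S" "w \<in> S"
  shows "(x - closest_point S x) \<bullet> w = 0"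
proof -
  let ?p = "closest_point S x"
  have conv: "convex S" and cl: "closed S"
    using assms(1) by (simp_all add: subspace_imp_convex closed_subspace)
  have p: "?p \<in> S"
    using assms(1) by (rule closest_point_in_subspace)
  have "(x - ?p) \<bullet> ((?p + c *\<^sub>R w) - ?p) \<le> 0" for c
    using assms p by (intro closest_point_dot conv cl) (simp add: subspace_add subspace_scale)
  from this[of 1] this[of "-1"] show ?thesis by simp
qed

lemma closest_point_subspace_unique:
  fixes S :: "'a::euclidean_space set"
  assumes "subspace S" "y \<in> S" "\<And>w. w \<in> S \<Longrightarrow> (x - y) \<bullet> w = 0"
  shows "closest_point S x = y"
proof -
  let ?p = "closest_point S x"
  have "?p \<in> S"
    using assms(1) by (rule closest_point_in_subspace)
  hence d: "y - ?p \<in> S" using assms(1,2) by (simp add: subspace_diff)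
  have "(y - ?p) \<bullet> (y - ?p) = (x - ?p) \<bullet> (y - ?p) - (x - y) \<bullet> (y - ?p)"
    by (simp add: inner_diff_left)
  also have "\<dots> = 0"
    using closest_point_subspace_orthogonal[OF assms(1) d] assms(3)[OF d] by simp
  finally show ?thesis by simp
qed

lemma linear_closest_point_subspace:
  fixes S :: "'a::euclidean_space set"
  assumes S: "subspace S"
  shows "linear (closest_point S)"
proof
  let ?p = "closest_point S"
  have orth: "(x - ?p x) \<bullet> w = 0" if "w \<in> S" for x w
    using closest_point_subspace_orthogonal[OF S that] .
  fix x y
  show "?p (x + y) = ?p x + ?p y"
  proof (rule closest_point_subspace_unique[OF S])
    show "?p x + ?p y \<in> S" using S by (simp add: subspace_add closest_point_in_subspace)
    fix w assume "w \<in> S"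
    have "(x + y - (?p x + ?p y)) \<bullet> w = (x - ?p x) \<bullet> w + (y - ?p y) \<bullet> w"
      by (simp add: inner_diff_left inner_add_left)
    thus "(x + y - (?p x + ?p y)) \<bullet> w = 0" using orth[OF \<open>w \<in> S\<close>] by simp
  qed
next
  let ?p = "closest_point S"
  fix c :: real and x
  show "?p (c *\<^sub>R x) = c *\<^sub>R ?p x"
  proof (rule closest_point_subspace_unique[OF S])
    show "c *\<^sub>R ?p x \<in> S" using S by (simp add: subspace_scale closest_point_in_subspace)
    fix w assume "w \<in> S"
    have "c *\<^sub>R x - c *\<^sub>R ?p x = c *\<^sub>R (x - ?p x)" by (simp add: scaleR_diff_right)
    thus "(c *\<^sub>R x - c *\<^sub>R ?p x) \<bullet> w = 0"
      using closest_point_subspace_orthogonal[OF S \<open>w \<in> S\<close>] by simp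
  qed
qed

lemma closest_point_subspace_self_adjoint:
  fixes S :: "'a::euclidean_space set"
  assumes "subspace S"
  shows "closest_point S x \<bullet> y = x \<bullet> closest_point S y"
proof -
  have "(x - closest_point S x) \<bullet> closest_point S y = 0"
       "(y - closest_point S y) \<bullet> closest_point S x = 0"
    by (simp_all add: closest_point_subspace_orthogonal closest_point_in_subspace assms)
  thus ?thesis by (simp add: inner_diff_left) (metis inner_commute)
qed

lemma symmetric_matrix_if_self_adjoint:
  fixes M :: "real^'n^'n"
  assumes "\<And>x y. (M *v x) \<bullet> y = x \<bullet> (M *v y)"
  shows "transpose M = M"
proof -
  have "(\<lambda>x. transpose M *v x) = (\<lambda>x. M *v x)"
    using adjoint_matrix[of M] adjoint_unique[of "\<lambda>x. M *v x" "\<lambda>x. M *v x"] assms by simp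
  thus ?thesis by (metis matrix_of_matrix_vector_mul)
qed

definition penrose_conditions :: "real^'n^'m \<Rightarrow> real^'m^'n \<Rightarrow> bool" where
  "penrose_conditions A B \<longleftrightarrow> A ** B ** A = A \<and> B ** A ** B = B \<and>
     transpose (A ** B) = A ** B \<and> transpose (B ** A) = B ** A"

lemma subspace_row_space: "subspace (range (\<lambda>z. z v* (A::real^'n^'m)))"
proof -
  have "range (\<lambda>z. z v* A) = range (\<lambda>z. transpose A *v z)" by simp
  thus ?thesis by (metis linear_subspace_image matrix_vector_mul_linear subspace_UNIV)
qed

lemma matrix_vector_mult_closest_point_row_space:
  fixes A :: "real^'n^'m"
  shows "A *v closest_point (range (\<lambda>z. z v* A)) x = A *v x"
proof -
  let ?r = "x - closest_point (range (\<lambda>z. z v* A)) x"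
  have "z \<bullet> (A *v ?r) = 0" for z
    using closest_point_subspace_orthogonal[OF subspace_row_space, of "z v* A" A x]
    by (simp add: dot_lmul_matrix[symmetric] inner_commute)
  from this[of "A *v ?r"] show ?thesis by (simp add: matrix_vector_mult_diff_distrib)
qed

lemma inj_on_row_space: "inj_on (\<lambda>x. (A::real^'n^'m) *v x) (range (\<lambda>z. z v* A))"
proof (rule inj_onI)
  fix u v assume "u \<in> range (\<lambda>z. z v* A)" "v \<in> range (\<lambda>z. z v* A)" and eq: "A *v u = A *v v"
  then obtain z1 z2 where "u = z1 v* A" "v = z2 v* A" by blast
  hence z: "u - v = (z1 - z2) v* A"
    by (metis transpose_matrix_vector matrix_vector_mult_diff_distrib)
  have "(u - v) \<bullet> (u - v) = (z1 - z2) \<bullet> (A *v (u - v))"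
    by (metis z dot_lmul_matrix)
  thus "u = v" using eq by (simp add: matrix_vector_mult_diff_distrib)
qed

lemma penrose_conditions_exist: "\<exists>B. penrose_conditions (A::real^'n^'m) B"
proof -
  define V where "V = range (\<lambda>x. A *v x)"
  define W where "W = range (\<lambda>z. z v* A)"
  have V: "subspace V"
    unfolding V_def by (metis linear_subspace_image matrix_vector_mul_linear subspace_UNIV)
  have W: "subspace W" unfolding W_def by (rule subspace_row_space)
  have span_W: "span W = W" using W by (rule span_eq_iff[THEN iffD2])
  have "inj_on (\<lambda>x. A *v x) (span W)"
    unfolding span_W unfolding W_def by (rule inj_on_row_space)
  hence "\<exists>g. range g \<subseteq> span W \<and> linear g \<and> (\<forall>u\<in>span W. g (A *v u) = u)"
    by (rule linear_inj_on_left_inverse[OF matrix_vector_mul_linear])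
  then obtain g where g: "linear g" "\<And>u. u \<in> W \<Longrightarrow> g (A *v u) = u"
    unfolding span_W by blast
  have AW: "A *v closest_point W x = A *v x" for x
    unfolding W_def by (rule matrix_vector_mult_closest_point_row_space)
  have gA: "g (A *v x) = closest_point W x" for x
    by (metis AW g(2) W closest_point_in_subspace)
  \<comment> \<open>b y is the unique preimage in the row space of the projection of y onto the column space\<close>
  define b where "b = g \<circ> closest_point V"
  have "linear b"
    unfolding b_def by (rule linear_compose[OF linear_closest_point_subspace[OF V] g(1)])
  hence Bv: "matrix b *v y = b y" for y by (simp add: matrix_works)
  have Ab: "A *v b y = closest_point V y" for y
  proof -
    obtain x where "closest_point V y = A *v x"
      using closest_point_in_subspace[OF V] unfolding V_def by blast
    thus ?thesis unfolding b_def by (simp add: gA AW)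
  qed
  have bAb: "b (A *v b y) = b y" for y
    unfolding Ab by (simp add: b_def closest_point_self closest_point_in_subspace[OF V])
  have bA: "b (A *v x) = closest_point W x" for x
    unfolding b_def V_def by (simp add: closest_point_self gA)
  have "penrose_conditions A (matrix b)"
    unfolding penrose_conditions_def
  proof (intro conjI)
    show "A ** matrix b ** A = A"
      by (simp add: matrix_eq matrix_vector_mul_assoc[symmetric] Bv Ab V_def closest_point_self)
    show "matrix b ** A ** matrix b = matrix b"
      by (simp add: matrix_eq matrix_vector_mul_assoc[symmetric] Bv bAb)
    show "transpose (A ** matrix b) = A ** matrix b"
      by (rule symmetric_matrix_if_self_adjoint)
         (simp add: matrix_vector_mul_assoc[symmetric] Bv Ab closest_point_subspace_self_adjoint V)
    show "transpose (matrix b ** A) = matrix b ** A"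
      by (rule symmetric_matrix_if_self_adjoint)
         (simp add: matrix_vector_mul_assoc[symmetric] Bv bA closest_point_subspace_self_adjoint W)
  qed
  thus ?thesis ..
qed

lemma penrose_conditions_unique:
  assumes "penrose_conditions A B" "penrose_conditions A C"
  shows "B = C"
proof -
  have b1: "A ** B ** A = A" and b2: "B ** A ** B = B" and b3: "transpose (A ** B) = A ** B"
    and b4: "transpose (B ** A) = B ** A" using assms(1) unfolding penrose_conditions_def by auto
  have c1: "A ** C ** A = A" and c2: "C ** A ** C = C" and c3: "transpose (A ** C) = A ** C"
    and c4: "transpose (C ** A) = C ** A" using assms(2) unfolding penrose_conditions_def by auto
  have tA1: "transpose A = transpose A ** (A ** C)"
    using c1 c3 by (metis matrix_transpose_mul matrix_mul_assoc)
  have tA2: "transpose A = (B ** A) ** transpose A"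
    using b1 b4 by (metis matrix_transpose_mul matrix_mul_assoc)
  have "B = B ** (transpose B ** transpose A)"
    using b2 b3 by (metis matrix_transpose_mul matrix_mul_assoc)
  also have "\<dots> = B ** (transpose B ** (transpose A ** (A ** C)))" using tA1 by simp
  also have "\<dots> = B ** (A ** B) ** (A ** C)"
    using b3 by (metis matrix_transpose_mul matrix_mul_assoc)
  also have "\<dots> = B ** A ** C" using b2 by (metis matrix_mul_assoc)
  finally have eB: "B = B ** A ** C" .
  have "C = (transpose A ** transpose C) ** C"
    using c2 c4 by (metis matrix_transpose_mul matrix_mul_assoc)
  also have "\<dots> = (((B ** A) ** transpose A) ** transpose C) ** C" using tA2 by simp
  also have "\<dots> = (B ** A) ** (C ** A) ** C"
    using c4 by (metis matrix_transpose_mul matrix_mul_assoc)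
  also have "\<dots> = B ** A ** C" using c2 by (metis matrix_mul_assoc)
  finally show ?thesis using eB by simp
qed

lemma penrose_conditions_pinv: "penrose_conditions A (pinv A)"
proof -
  have "\<exists>!B. penrose_conditions A B"
    using penrose_conditions_exist penrose_conditions_unique by blast
  from theI'[OF this] show ?thesis unfolding pinv_def penrose_conditions_def .
qed

lemma symmetric_pinv_mult: "transpose (pinv A ** A) = pinv A ** A"
  using penrose_conditions_pinv unfolding penrose_conditions_def by blast

lemma strongly_monotone_if_deriv_ge:
  fixes f f' :: "real \<Rightarrow> real"
  assumes deriv: "\<And>x. x \<in> {c..C} \<Longrightarrow> (f has_real_derivative f' x) (at x)"
    and deriv_ge: "\<And>x. x \<in> {c..C} \<Longrightarrow> m \<le> f' x"
    and "a \<in> {c..C}" "b \<in> {c..C}"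
  shows "m * (a - b)^2 \<le> (a - b) * (f a - f b)"
proof -
  have ordered: "m * (v - u)^2 \<le> (v - u) * (f v - f u)"
    if "u < v" and uv: "u \<in> {c..C}" "v \<in> {c..C}" for u v
  proof -
    obtain z where z: "u < z" "z < v" "f v - f u = (v - u) * f' z"
      using MVT2[OF \<open>u < v\<close>, of f f'] deriv uv by force
    have "(v - u)^2 * m \<le> (v - u)^2 * f' z"
      using deriv_ge[of z] z uv by (intro mult_left_mono) auto
    thus ?thesis using z by (simp add: power2_eq_square mult_ac)
  qed
  consider "a < b" | "a = b" | "b < a" by linarith
  thus ?thesis
    by cases (use ordered[of a b] ordered[of b a] assms(3,4) in \<open>auto simp: power2_commute algebra_simps\<close>)
qed

lemma Bfun_if_components_bounded:
  fixes f :: "'a \<Rightarrow> real^'n"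
  assumes "eventually (\<lambda>t. \<forall>i. \<bar>f t $ i\<bar> \<le> K) F"
  shows "Bfun f F"
proof (rule BfunI)
  show "eventually (\<lambda>t. norm (f t) \<le> CARD('n) * K) F"
    using assms
  proof eventually_elim
    case (elim t)
    have "norm (f t) \<le> (\<Sum>i\<in>UNIV. \<bar>f t $ i\<bar>)" by (rule norm_le_l1_cart)
    also have "\<dots> \<le> CARD('n) * K" using elim by (intro sum_bounded_above) auto
    finally show ?case .
  qed
qed

lemma inner_tendsto_zero_if_complementary_projections:
  fixes P :: "real^'n^'n" and d g :: "'a \<Rightarrow> real^'n"
  assumes "transpose P = P"
    and "((\<lambda>t. P *v d t) \<longlongrightarrow> 0) F" and "((\<lambda>t. (mat 1 - P) *v g t) \<longlongrightarrow> 0) F"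
    and "Bfun d F" and "Bfun g F"
  shows "((\<lambda>t. d t \<bullet> g t) \<longlongrightarrow> 0) F"
proof -
  have split: "d t \<bullet> g t = (P *v d t) \<bullet> g t + d t \<bullet> ((mat 1 - P) *v g t)" for t
  proof -
    have "d t \<bullet> (P *v g t) = (P *v d t) \<bullet> g t"
      by (metis assms(1) dot_lmul_matrix transpose_matrix_vector)
    thus ?thesis by (simp add: matrix_vector_mult_diff_rdistrib inner_diff_right)
  qed
  have "Zfun (\<lambda>t. (P *v d t) \<bullet> g t) F"
    using assms(2,5) by (intro bounded_bilinear.Zfun_prod_Bfun[OF bounded_bilinear_inner])
      (simp_all add: tendsto_Zfun_iff)
  moreover have "Zfun (\<lambda>t. d t \<bullet> ((mat 1 - P) *v g t)) F"
    using assms(3,4) by (intro bounded_bilinear.Bfun_prod_Zfun[OF bounded_bilinear_inner])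
      (simp_all add: tendsto_Zfun_iff)
  ultimately show ?thesis unfolding split tendsto_Zfun_iff by (simp add: Zfun_add)
qed

lemma tendsto_zero_if_sq_norm_le:
  fixes d :: "'a \<Rightarrow> 'b::real_normed_vector"
  assumes "0 < m" and "eventually (\<lambda>t. m * (norm (d t))^2 \<le> h t) F" and "(h \<longlongrightarrow> 0) F"
  shows "(d \<longlongrightarrow> 0) F"
proof -
  have "eventually (\<lambda>t. norm ((norm (d t))^2) \<le> h t / m) F"
    using assms(2) by eventually_elim (use \<open>0 < m\<close> in \<open>simp add: field_simps\<close>)
  moreover have "((\<lambda>t. h t / m) \<longlongrightarrow> 0) F" using tendsto_divide_zero[OF assms(3)] .
  ultimately have "((\<lambda>t. (norm (d t))^2) \<longlongrightarrow> 0) F" by (rule Lim_null_comparison)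
  from tendsto_real_sqrt[OF this] show ?thesis by (simp add: tendsto_norm_zero_iff)
qed

lemma tendsto_diff_zero_if_monotone_transform:
  fixes A :: "real^'n^'m" and x1 x2 :: "'a \<Rightarrow> real^'n" and \<phi> :: "real \<Rightarrow> real"
  assumes "0 < m" and cont: "continuous_on {c..C} \<phi>"
    and mono: "\<And>a b. a \<in> {c..C} \<Longrightarrow> b \<in> {c..C} \<Longrightarrow> m * (a - b)^2 \<le> (a - b) * (\<phi> a - \<phi> b)"
    and range: "eventually (\<lambda>t. \<forall>i. x1 t $ i \<in> {c..C} \<and> x2 t $ i \<in> {c..C}) F"
    and hA: "((\<lambda>t. A *v (x1 t - x2 t)) \<longlongrightarrow> 0) F"
    and hP: "((\<lambda>t. (mat 1 - pinv A ** A) *v ((\<chi> i. \<phi> (x1 t $ i)) - (\<chi> i. \<phi> (x2 t $ i)))) \<longlongrightarrow> 0) F"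
  shows "((\<lambda>t. x1 t - x2 t) \<longlongrightarrow> 0) F"
proof -
  define d where "d t = x1 t - x2 t" for t
  define g where "g t = (\<chi> i. \<phi> (x1 t $ i)) - (\<chi> i. \<phi> (x2 t $ i))" for t
  have "bounded (\<phi> ` {c..C})"
    by (intro compact_imp_bounded compact_continuous_image cont compact_Icc)
  then obtain K where K: "\<forall>x\<in>{c..C}. \<bar>\<phi> x\<bar> \<le> K"
    unfolding bounded_iff by auto
  have bounds: "eventually (\<lambda>t. \<forall>i. \<bar>d t $ i\<bar> \<le> C - c \<and> \<bar>g t $ i\<bar> \<le> 2 * K) F"
    using range
  proof eventually_elim
    case (elim t)
    show ?case
    proof
      fix i
      have "x1 t $ i \<in> {c..C}" "x2 t $ i \<in> {c..C}" using elim by auto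
      moreover from this have "\<bar>\<phi> (x1 t $ i)\<bar> \<le> K" "\<bar>\<phi> (x2 t $ i)\<bar> \<le> K" using K by auto
      ultimately show "\<bar>d t $ i\<bar> \<le> C - c \<and> \<bar>g t $ i\<bar> \<le> 2 * K"
        by (auto simp: d_def g_def abs_le_iff)
    qed
  qed
  have bounded_d: "Bfun d F"
    using bounds by (intro Bfun_if_components_bounded[where K = "C - c"]) (auto elim: eventually_mono)
  have bounded_g: "Bfun g F"
    using bounds by (intro Bfun_if_components_bounded[where K = "2 * K"]) (auto elim: eventually_mono)
  have Pd: "((\<lambda>t. (pinv A ** A) *v d t) \<longlongrightarrow> 0) F"
    using bounded_linear.tendsto[OF matrix_vector_mul_bounded_linear[of "pinv A"] hA]
    by (simp add: d_def matrix_vector_mul_assoc)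
  have Qg: "((\<lambda>t. (mat 1 - pinv A ** A) *v g t) \<longlongrightarrow> 0) F"
    using hP unfolding g_def .
  have inner_lim: "((\<lambda>t. d t \<bullet> g t) \<longlongrightarrow> 0) F"
    by (rule inner_tendsto_zero_if_complementary_projections[OF symmetric_pinv_mult Pd Qg bounded_d bounded_g])
  have lower: "eventually (\<lambda>t. m * (norm (d t))^2 \<le> d t \<bullet> g t) F"
    using range
  proof eventually_elim
    case (elim t)
    have "m * (norm (d t))^2 = (\<Sum>i\<in>UNIV. m * (d t $ i)^2)"
      unfolding power2_norm_eq_inner inner_vec_def by (simp add: sum_distrib_left power2_eq_square)
    also have "\<dots> \<le> (\<Sum>i\<in>UNIV. d t $ i * g t $ i)"
      using elim by (intro sum_mono) (simp add: d_def g_def mono)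
    also have "\<dots> = d t \<bullet> g t" by (simp add: inner_vec_def)
    finally show ?case .
  qed
  from tendsto_zero_if_sq_norm_le[OF \<open>0 < m\<close> lower inner_lim]
  show ?thesis unfolding d_def .
qed

lemma ln_strongly_monotone:
  fixes a b c C :: real
  assumes "0 < c" "a \<in> {c..C}" "b \<in> {c..C}"
  shows "1 / C * (a - b)^2 \<le> (a - b) * (ln a - ln b)"
proof (rule strongly_monotone_if_deriv_ge[OF _ _ assms(2,3)])
  fix x assume "x \<in> {c..C}"
  thus "(ln has_real_derivative 1 / x) (at x)" "1 / C \<le> 1 / x"
    using \<open>0 < c\<close> by (auto intro!: DERIV_ln_divide frac_le)
qed

lemma powr_strongly_monotone:
  fixes a b :: real
  assumes "0 < c" "p \<le> 1" "a \<in> {c..C}" "b \<in> {c..C}"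
  shows "\<bar>p\<bar> * C powr (p - 1) * (a - b)^2 \<le> (a - b) * (sgn p * a powr p - sgn p * b powr p)"
proof (rule strongly_monotone_if_deriv_ge[where f = "\<lambda>x. sgn p * x powr p", OF _ _ assms(3,4)])
  fix x assume x: "x \<in> {c..C}"
  thus "((\<lambda>x. sgn p * x powr p) has_real_derivative sgn p * (p * x powr (p - 1))) (at x)"
    using \<open>0 < c\<close> by (auto intro!: derivative_eq_intros)
  have "C powr (p - 1) \<le> x powr (p - 1)"
    using x \<open>0 < c\<close> \<open>p \<le> 1\<close> by (intro powr_mono2') auto
  hence "\<bar>p\<bar> * C powr (p - 1) \<le> \<bar>p\<bar> * x powr (p - 1)"
    by (rule mult_left_mono) simp
  also have "\<dots> = sgn p * (p * x powr (p - 1))"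
    by (simp add: abs_sgn mult_ac)
  finally show "\<bar>p\<bar> * C powr (p - 1) \<le> sgn p * (p * x powr (p - 1))" .
qed

lemma common_positive_bounds:
  fixes x1 x2 :: "real \<Rightarrow> real^'n"
  assumes "\<exists>c C. 0 < c \<and> (\<forall>t\<ge>0. \<forall>i. c \<le> x1 t $ i \<and> x1 t $ i \<le> C)"
    and "\<exists>c C. 0 < c \<and> (\<forall>t\<ge>0. \<forall>i. c \<le> x2 t $ i \<and> x2 t $ i \<le> C)"
  obtains c C where "0 < c" "c \<le> C"
    and "eventually (\<lambda>t. \<forall>i. x1 t $ i \<in> {c..C} \<and> x2 t $ i \<in> {c..C}) at_top"
proof -
  obtain c1 C1 where "0 < c1" and b1: "\<And>t i. t \<ge> 0 \<Longrightarrow> c1 \<le> x1 t $ i \<and> x1 t $ i \<le> C1"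
    using assms(1) by blast
  obtain c2 C2 where "0 < c2" and b2: "\<And>t i. t \<ge> 0 \<Longrightarrow> c2 \<le> x2 t $ i \<and> x2 t $ i \<le> C2"
    using assms(2) by blast
  have box: "x1 t $ i \<in> {min c1 c2..max C1 C2} \<and> x2 t $ i \<in> {min c1 c2..max C1 C2}"
    if "0 \<le> t" for t i
    using b1[OF that, of i] b2[OF that, of i] by (simp add: min_le_iff_disj le_max_iff_disj)
  show ?thesis
  proof (rule that)
    show "0 < min c1 c2" using \<open>0 < c1\<close> \<open>0 < c2\<close> by simp
    from box[of 0] have "min c1 c2 \<le> x1 0 $ i \<and> x1 0 $ i \<le> max C1 C2" for i by simp
    thus "min c1 c2 \<le> max C1 C2" by (blast intro: order_trans)
    show "eventually (\<lambda>t. \<forall>i. x1 t $ i \<in> {min c1 c2..max C1 C2} \<and> x2 t $ i \<in> {min c1 c2..max C1 C2}) at_top"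
      using eventually_ge_at_top[of 0] by (rule eventually_mono) (use box in blast)
  qed
qed

theorem mainTheorem13:
  fixes L :: nat and A :: "real^'n^'m" and x1 x2 :: "real \<Rightarrow> real^'n"
  assumes L: "L \<ge> 1"
    and b1: "\<exists>c C. 0 < c \<and> (\<forall>t\<ge>0. \<forall>i. c \<le> x1 t $ i \<and> x1 t $ i \<le> C)"
    and b2: "\<exists>c C. 0 < c \<and> (\<forall>t\<ge>0. \<forall>i. c \<le> x2 t $ i \<and> x2 t $ i \<le> C)"
    and hA: "((\<lambda>t. A *v (x1 t - x2 t)) \<longlongrightarrow> 0) at_top"
    and hP: "if L = 2 then
        ((\<lambda>t. (mat 1 - pinv A ** A) *v (elog (x1 t) - elog (x2 t))) \<longlongrightarrow> 0) at_top
      else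
        ((\<lambda>t. (mat 1 - pinv A ** A) *v
            (epowr (x1 t) (2 / real L - 1) - epowr (x2 t) (2 / real L - 1))) \<longlongrightarrow> 0) at_top"
  shows "((\<lambda>t. x1 t - x2 t) \<longlongrightarrow> 0) at_top"
proof -
  obtain c C where c: "0 < c" "c \<le> C"
    and range: "eventually (\<lambda>t. \<forall>i. x1 t $ i \<in> {c..C} \<and> x2 t $ i \<in> {c..C}) at_top"
    using common_positive_bounds[OF b1 b2] .
  show ?thesis
  proof (cases "L = 2")
    case True
    show ?thesis
      using hP True c
      by (intro tendsto_diff_zero_if_monotone_transform[OF _ _ ln_strongly_monotone range hA])
         (auto simp: elog_def intro!: continuous_on_ln continuous_on_id)
  next
    case False
    define p where "p = 2 / real L - 1"
    have "p \<le> 1" "p \<noteq> 0"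
      using L False by (auto simp: p_def field_simps)
    have scale: "(\<chi> i. sgn p * v $ i powr p) = sgn p *\<^sub>R epowr v p" for v :: "real^'n"
      by (simp add: epowr_def vec_eq_iff)
    have "((\<lambda>t. (mat 1 - pinv A ** A) *v (epowr (x1 t) p - epowr (x2 t) p)) \<longlongrightarrow> 0) at_top"
      using hP False by (simp add: p_def)
    from tendsto_scaleR[OF tendsto_const this, of "sgn p"]
    have "((\<lambda>t. (mat 1 - pinv A ** A) *v
        ((\<chi> i. sgn p * x1 t $ i powr p) - (\<chi> i. sgn p * x2 t $ i powr p))) \<longlongrightarrow> 0) at_top"
      by (simp only: scale scaleR_diff_right[symmetric] matrix_vector_mult_scaleR scaleR_zero_right)
    then show ?thesis
      using c \<open>p \<le> 1\<close> \<open>p \<noteq> 0\<close>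
      by (intro tendsto_diff_zero_if_monotone_transform[OF _ _ powr_strongly_monotone range hA])
         (auto simp: abs_sgn_eq intro!: continuous_intros)
  qed
qed

end
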